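(* Suppose $X \in M_m^{S}\otimes M_n^{S}$ and let $B \in M_m\otimes M_n$ be any matrix with $X = \tfrac14\big(B + B^T + B^\Gamma + (B^T)^\Gamma\big)$. Then \[ \mu^{\mathbb{C}}_{\min}(X) \ge W^{1+i}_{\min}(B) \quad\text{and}\quad \mu^{\mathbb{C}}_{\max}(X) \le W^{1+i}_{\max}(B). \]
   Context: $M_n$ denotes real $n\times n$ matrices, $M_n^S$ the real symmetric ones, and $M_m\otimes M_n$ is identified with $M_{mn}$ via the Kronecker product; $M_m^S\otimes M_n^S$ is the span of $Y\otimes Z$ with $Y\in M_m^S$, $Z\in M_n^S$ (equivalently, real $X$ with $X = X^T = X^\Gamma$). For $A = \sum_j X_j \otimes Y_j$, the partial transpose is $A^\Gamma = \sum_j X_j \otimes Y_j^T$. $\mu^{\mathbb{C}}_{\min}(X) = \min\{(\mathbf{v}\otimes\mathbf{w})^*X(\mathbf{v}\otimes\mathbf{w}) : \mathbf{v}\in\mathbb{C}^m,\mathbf{w}\in\mathbb{C}^n,\|\mathbf{v}\|=\|\mathbf{w}\|=1\}$ and $\mu^{\mathbb{C}}_{\max}(X)$ is the corresponding maximum. The numerical range of $A\in M_N(\mathbb{C})$ is $W(A) = \{\mathbf{x}^*A\mathbf{x} : \mathbf{x}\in\mathbb{C}^N, \|\mathbf{x}\|=1\}$. For real $B$, $W^{1+i}(B) = \{c\in\mathbb{R} : c(1+i)\in W(B+iB^\Gamma)\}$, a nonempty compact interval with minimum $W^{1+i}_{\min}(B)$ and maximum $W^{1+i}_{\max}(B)$.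 *)

theory Defs
  imports "HOL-Analysis.Analysis"
begin

text \<open>Matrices in M_m (x) M_n are represented as real matrices indexed by the
product type 'm * 'n (row index (i,j), column index (k,l)); this is the
Kronecker identification of M_m (x) M_n with M_mn.\<close>

type_synonym ('m, 'n) bimat = "real ^ ('m \<times> 'n) ^ ('m \<times> 'n)"

definition kron :: "real ^ 'm::finite ^ 'm \<Rightarrow> real ^ 'n::finite ^ 'n \<Rightarrow> ('m, 'n) bimat" where
  "kron Y Z = (\<chi> r c. Y $ fst r $ fst c * Z $ snd r $ snd c)"

definition sym_mat :: "real ^ 'k::finite ^ 'k \<Rightarrow> bool" where
  "sym_mat Y \<longleftrightarrow> transpose Y = Y"

text \<open>Partial transpose on the second factor: (Y (x) Z)^Gamma = Y (x) Z^T.\<close>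
definition ptrans :: "('m::finite, 'n::finite) bimat \<Rightarrow> ('m, 'n) bimat" where
  "ptrans A = (\<chi> r c. A $ (fst r, snd c) $ (fst c, snd r))"

definition symsym :: "('m::finite, 'n::finite) bimat set" where
  "symsym = span {kron Y Z | Y Z. sym_mat Y \<and> sym_mat Z}"

definition prod_vals :: "('m::finite, 'n::finite) bimat \<Rightarrow> real set" where
  "prod_vals X = {c. \<exists>(v::complex^'m) (w::complex^'n). norm v = 1 \<and> norm w = 1 \<and>
     complex_of_real c = (\<Sum>r\<in>UNIV. \<Sum>s\<in>UNIV.
        cnj (v $ fst r * w $ snd r) * complex_of_real (X $ r $ s) * (v $ fst s * w $ snd s))}"

definition mu_min_C :: "('m::finite, 'n::finite) bimat \<Rightarrow> real" where
  "mu_min_C X = Inf (prod_vals X)"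

definition mu_max_C :: "('m::finite, 'n::finite) bimat \<Rightarrow> real" where
  "mu_max_C X = Sup (prod_vals X)"

definition numrange :: "complex ^ 'k ^ 'k \<Rightarrow> complex set" where
  "numrange A = {(\<Sum>i\<in>UNIV. \<Sum>j\<in>UNIV. cnj (x $ i) * A $ i $ j * x $ j) | x::complex^'k::finite. norm x = 1}"

definition cmat :: "real ^ 'k::finite ^ 'k \<Rightarrow> complex ^ 'k ^ 'k" where
  "cmat A = (\<chi> i j. complex_of_real (A $ i $ j))"

definition W1i :: "('m::finite, 'n::finite) bimat \<Rightarrow> real set" where
  "W1i B = {c::real. complex_of_real c * (1 + \<i>) \<in> numrange (\<chi> r s. cmat B $ r $ s + \<i> * cmat (ptrans B) $ r $ s)}"

definition W1i_min :: "('m::finite, 'n::finite) bimat \<Rightarrow> real" where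
  "W1i_min B = Inf (W1i B)"

definition W1i_max :: "('m::finite, 'n::finite) bimat \<Rightarrow> real" where
  "W1i_max B = Sup (W1i B)"

end

theory Submission
  imports Defs
begin

(* Write a unit product vector as v (x) w with v = p1 + i p2 and w = q1 + i q2. Since X is real and
   invariant under both transposition and partial transposition, the value (v (x) w)^* X (v (x) w)
   does not change when v or w is conjugated; averaging the four conjugates shows that it is the sum
   of the four real values (pa (x) qb)^T X (pa (x) qb), whose weights |pa|^2 |qb|^2 add up to 1.
   On real product vectors B, B^T, B^Gamma and (B^T)^Gamma all give the same value c, hence X gives c
   as well, and (p (x) q)^T (B + i B^Gamma) (p (x) q) = c (1 + i): for unit p, q the value c lies in
   W^{1+i}(B). So every product value of X is a convex combination of points of the compact set
   W^{1+i}(B). *)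

definition prod_form :: "('m::finite, 'n::finite) bimat \<Rightarrow> ('m \<Rightarrow> complex) \<Rightarrow> ('n \<Rightarrow> complex) \<Rightarrow> complex" where
  "prod_form X v w = (\<Sum>r\<in>UNIV. \<Sum>s\<in>UNIV.
     cnj (v (fst r) * w (snd r)) * complex_of_real (X $ r $ s) * (v (fst s) * w (snd s)))"

lemma sum_reindex_involution:
  fixes g :: "'a::finite \<Rightarrow> 'b::comm_monoid_add"
  assumes "\<And>x. f (f x) = x"
  shows "sum g UNIV = sum (\<lambda>x. g (f x)) UNIV"
  by (rule sum.reindex_bij_witness[of _ f f]) (auto simp: assms)

lemma prod_form_pairs:
  "prod_form X v w = (\<Sum>((i,j),(k,l))\<in>UNIV.
     cnj (v i * w j) * complex_of_real (X $ (i,j) $ (k,l)) * (v k * w l))"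
  unfolding prod_form_def by (simp add: sum.cartesian_product case_prod_beta)

lemma prod_form_transpose:
  "prod_form (transpose X) v w = prod_form X (\<lambda>i. cnj (v i)) (\<lambda>j. cnj (w j))"
  unfolding prod_form_pairs
  by (subst sum_reindex_involution[where f = "\<lambda>(r,s). (s,r)"])
     (auto simp: transpose_def case_prod_beta algebra_simps intro!: sum.cong)

lemma prod_form_ptrans:
  "prod_form (ptrans X) v w = prod_form X v (\<lambda>j. cnj (w j))"
  unfolding prod_form_pairs
  by (subst sum_reindex_involution[where f = "\<lambda>((i,j),(k,l)). ((i,l),(k,j))"])
     (auto simp: ptrans_def case_prod_beta algebra_simps intro!: sum.cong)

lemma prod_form_add: "prod_form (A + C) v w = prod_form A v w + prod_form C v w"
  unfolding prod_form_def by (simp add: sum.distrib[symmetric] algebra_simps)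

lemma prod_form_scaleR: "prod_form (c *\<^sub>R A) v w = c * prod_form A v w"
  unfolding prod_form_def by (simp add: sum_distrib_left algebra_simps)

definition prod_qform :: "('m::finite, 'n::finite) bimat \<Rightarrow> ('m \<Rightarrow> real) \<Rightarrow> ('n \<Rightarrow> real) \<Rightarrow> real" where
  "prod_qform X p q = (\<Sum>r\<in>UNIV. \<Sum>s\<in>UNIV. p (fst r) * q (snd r) * X $ r $ s * p (fst s) * q (snd s))"

lemma prod_form_of_real:
  "prod_form X (\<lambda>i. of_real (p i)) (\<lambda>j. of_real (q j)) = of_real (prod_qform X p q)"
  unfolding prod_form_def prod_qform_def by (simp add: mult.assoc)

lemma prod_qform_transpose: "prod_qform (transpose B) p q = prod_qform B p q"
  using prod_form_transpose[of B "\<lambda>i. of_real (p i)" "\<lambda>j. of_real (q j)"]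
  by (simp add: prod_form_of_real)

lemma prod_qform_ptrans: "prod_qform (ptrans B) p q = prod_qform B p q"
  using prod_form_ptrans[of B "\<lambda>i. of_real (p i)" "\<lambda>j. of_real (q j)"]
  by (simp add: prod_form_of_real)

lemma prod_qform_symmetrize:
  assumes "X = (1/4) *\<^sub>R (B + transpose B + ptrans B + ptrans (transpose B))"
  shows "prod_qform X p q = prod_qform B p q"
proof -
  have "of_real (prod_qform X p q) = (of_real (prod_qform B p q) :: complex)"
    unfolding assms prod_form_of_real[symmetric] prod_form_add prod_form_scaleR
    by (simp add: prod_form_of_real prod_qform_transpose prod_qform_ptrans)
  then show ?thesis by simp
qed

lemma symsym_fixed:
  assumes "X \<in> symsym"
  shows "transpose X = X \<and> ptrans X = X"
proof -
  have "X \<in> span {kron Y Z | Y Z. sym_mat Y \<and> sym_mat Z}"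
    using assms by (simp add: symsym_def)
  then show ?thesis
  proof (induct rule: span_induct_alt)
    case base
    show ?case by (simp add: transpose_def ptrans_def vec_eq_iff)
  next
    case (step c x y)
    then obtain Y Z where x: "x = kron Y Z" "transpose Y = Y" "transpose Z = Z"
      unfolding sym_mat_def by blast
    have "Y $ a $ b = Y $ b $ a" "Z $ a' $ b' = Z $ b' $ a'" for a b a' b'
      using x(2,3) by (metis transpose_def vec_lambda_beta)+
    then have "transpose x = x \<and> ptrans x = x"
      by (simp add: x(1) kron_def transpose_def ptrans_def vec_eq_iff)
    with step(2) show ?case
      by (simp add: transpose_def ptrans_def vec_eq_iff)
  qed
qed

lemma cnj_mult_add_mult_cnj: "cnj a * b + a * cnj b = of_real (2 * (Re a * Re b + Im a * Im b))"
  by (simp add: complex_eq_iff)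

lemma prod_form_Re_Im:
  assumes "transpose X = X" and "ptrans X = X"
  shows "prod_form X v w = of_real
     (prod_qform X (\<lambda>i. Re (v i)) (\<lambda>j. Re (w j)) + prod_qform X (\<lambda>i. Re (v i)) (\<lambda>j. Im (w j))
    + prod_qform X (\<lambda>i. Im (v i)) (\<lambda>j. Re (w j)) + prod_qform X (\<lambda>i. Im (v i)) (\<lambda>j. Im (w j)))"
proof -
  let ?c = "\<lambda>u i. cnj (u i)"
  have "prod_form X v w = prod_form X v (?c w)" "prod_form X v w = prod_form X (?c v) (?c w)"
    "prod_form X v w = prod_form X (?c v) w"
    using prod_form_ptrans[of X v w] prod_form_transpose[of X v w]
      prod_form_ptrans[of X "?c v" "?c w"] assms by simp_all
  then have "4 * prod_form X v w
      = prod_form X v w + prod_form X v (?c w) + prod_form X (?c v) w + prod_form X (?c v) (?c w)"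
    by simp
  also have "\<dots> = (\<Sum>r\<in>UNIV. \<Sum>s\<in>UNIV. of_real (X $ r $ s) *
      ((cnj (v (fst r)) * v (fst s) + v (fst r) * cnj (v (fst s)))
     * (cnj (w (snd r)) * w (snd s) + w (snd r) * cnj (w (snd s)))))"
    unfolding prod_form_def by (simp add: sum.distrib[symmetric] algebra_simps)
  also have "\<dots> = 4 * of_real (\<Sum>r\<in>UNIV. \<Sum>s\<in>UNIV. X $ r $ s *
      ((Re (v (fst r)) * Re (v (fst s)) + Im (v (fst r)) * Im (v (fst s)))
     * (Re (w (snd r)) * Re (w (snd s)) + Im (w (snd r)) * Im (w (snd s)))))"
    unfolding cnj_mult_add_mult_cnj by (simp add: sum_distrib_left algebra_simps)
  also have "(\<Sum>r\<in>UNIV. \<Sum>s\<in>UNIV. X $ r $ s *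
      ((Re (v (fst r)) * Re (v (fst s)) + Im (v (fst r)) * Im (v (fst s)))
     * (Re (w (snd r)) * Re (w (snd s)) + Im (w (snd r)) * Im (w (snd s)))))
    = prod_qform X (\<lambda>i. Re (v i)) (\<lambda>j. Re (w j)) + prod_qform X (\<lambda>i. Re (v i)) (\<lambda>j. Im (w j))
    + prod_qform X (\<lambda>i. Im (v i)) (\<lambda>j. Re (w j)) + prod_qform X (\<lambda>i. Im (v i)) (\<lambda>j. Im (w j))"
    unfolding prod_qform_def by (simp add: sum.distrib[symmetric] algebra_simps)
  finally show ?thesis by (simp only: mult_cancel_left) simp
qed

lemma norm_square_Re_Im:
  fixes v :: "complex ^ 'k::finite"
  shows "(norm v)^2 = (\<Sum>i\<in>UNIV. (Re (v $ i))^2) + (\<Sum>i\<in>UNIV. (Im (v $ i))^2)"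
  unfolding norm_vec_def L2_set_def by (simp add: sum_nonneg cmod_power2 sum.distrib)

lemma prod_vals_eq:
  assumes "X \<in> symsym"
  shows "prod_vals X = {prod_qform X (\<lambda>i. Re (v $ i)) (\<lambda>j. Re (w $ j))
      + prod_qform X (\<lambda>i. Re (v $ i)) (\<lambda>j. Im (w $ j))
      + prod_qform X (\<lambda>i. Im (v $ i)) (\<lambda>j. Re (w $ j))
      + prod_qform X (\<lambda>i. Im (v $ i)) (\<lambda>j. Im (w $ j)) | v w. norm v = 1 \<and> norm w = 1}"
  using symsym_fixed[OF assms] unfolding prod_vals_def prod_form_def[symmetric]
  by (auto simp del: of_real_add simp add: prod_form_Re_Im)

lemma bounded_numrange: "bounded (numrange A)"
proof -
  have "numrange A = (\<lambda>x. \<Sum>i\<in>UNIV. \<Sum>j\<in>UNIV. cnj (x $ i) * A $ i $ j * x $ j) ` sphere 0 1"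
    unfolding numrange_def by auto
  also have "compact \<dots>"
    by (intro compact_continuous_image continuous_intros) simp
  finally show ?thesis by (rule compact_imp_bounded)
qed

lemma bounded_W1i: "bounded (W1i B)"
proof -
  let ?A = "\<chi> r s. cmat B $ r $ s + \<i> * cmat (ptrans B) $ r $ s"
  obtain K where K: "\<And>z. z \<in> numrange ?A \<Longrightarrow> norm z \<le> K"
    using bounded_numrange[of ?A] unfolding bounded_iff by blast
  have "\<bar>c\<bar> \<le> K" if "c \<in> W1i B" for c
  proof -
    have "\<bar>c\<bar> \<le> \<bar>c\<bar> * sqrt 2" by (simp add: mult_le_cancel_left1)
    also have "\<dots> = norm (complex_of_real c * (1 + \<i>))"
      by (simp add: norm_mult cmod_def real_sqrt_mult)
    also have "\<dots> \<le> K" using that K unfolding W1i_def by blast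
    finally show ?thesis .
  qed
  then show ?thesis unfolding bounded_iff by auto
qed

lemma sum_square_prod_index:
  fixes p :: "'m::finite \<Rightarrow> real" and q :: "'n::finite \<Rightarrow> real"
  shows "(\<Sum>r\<in>UNIV. (p (fst r) * q (snd r))^2) = (\<Sum>i\<in>UNIV. (p i)^2) * (\<Sum>j\<in>UNIV. (q j)^2)"
  by (simp add: sum_product sum.cartesian_product power_mult_distrib case_prod_beta
      flip: UNIV_Times_UNIV)

lemma prod_qform_mem_W1i:
  fixes B :: "('m::finite, 'n::finite) bimat"
  assumes "(\<Sum>i\<in>UNIV. (p i)^2) = 1" and "(\<Sum>j\<in>UNIV. (q j)^2) = 1"
  shows "prod_qform B p q \<in> W1i B"
proof -
  define y :: "complex ^ ('m \<times> 'n)" where "y = (\<chi> r. of_real (p (fst r) * q (snd r)))"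
  have "norm y = 1"
    unfolding norm_vec_def L2_set_def y_def using sum_square_prod_index[of p q] assms
    by (simp add: power_mult_distrib norm_mult)
  moreover have "(\<Sum>r\<in>UNIV. \<Sum>s\<in>UNIV. cnj (y $ r) *
        (\<chi> r s. cmat B $ r $ s + \<i> * cmat (ptrans B) $ r $ s) $ r $ s * y $ s)
      = prod_form B (\<lambda>i. of_real (p i)) (\<lambda>j. of_real (q j))
        + \<i> * prod_form (ptrans B) (\<lambda>i. of_real (p i)) (\<lambda>j. of_real (q j))"
    unfolding prod_form_def y_def cmat_def
    by (simp add: sum.distrib sum_distrib_left algebra_simps)
  moreover have "\<dots> = of_real (prod_qform B p q) * (1 + \<i>)"
    by (simp add: prod_form_of_real prod_qform_ptrans algebra_simps)
  ultimately show ?thesis unfolding W1i_def numrange_def by (auto intro!: exI[of _ y])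
qed

lemma prod_qform_scale:
  "prod_qform X (\<lambda>i. a * p i) (\<lambda>j. b * q j) = (a * b)^2 * prod_qform X p q"
  unfolding prod_qform_def
  by (simp add: sum_distrib_left algebra_simps power2_eq_square)

lemma prod_qform_W1i_bounds:
  fixes B :: "('m::finite, 'n::finite) bimat" and p :: "'m \<Rightarrow> real" and q :: "'n \<Rightarrow> real"
  defines "n \<equiv> (\<Sum>i\<in>UNIV. (p i)^2) * (\<Sum>j\<in>UNIV. (q j)^2)"
  shows "W1i_min B * n \<le> prod_qform B p q \<and> prod_qform B p q \<le> W1i_max B * n"
proof (cases "n = 0")
  case True
  then have "p = (\<lambda>i. 0) \<or> q = (\<lambda>j. 0)"
    unfolding n_def by (auto simp: sum_nonneg_eq_0_iff fun_eq_iff)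
  then have "prod_qform B p q = 0" by (auto simp: prod_qform_def)
  with True show ?thesis by simp
next
  case False
  define a where "a = 1 / sqrt (\<Sum>i\<in>UNIV. (p i)^2)"
  define b where "b = 1 / sqrt (\<Sum>j\<in>UNIV. (q j)^2)"
  have sums_nonneg: "(\<Sum>i\<in>UNIV. (p i)^2) \<ge> 0" "(\<Sum>j\<in>UNIV. (q j)^2) \<ge> 0"
    by (simp_all add: sum_nonneg)
  with False have "(\<Sum>i\<in>UNIV. (a * p i)^2) = 1" "(\<Sum>j\<in>UNIV. (b * q j)^2) = 1"
    by (simp_all add: a_def b_def n_def power_mult_distrib power_divide flip: sum_divide_distrib)
  then have "(a * b)^2 * prod_qform B p q \<in> W1i B"
    using prod_qform_mem_W1i prod_qform_scale by metis
  moreover have "(a * b)^2 = 1 / n"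
    using sums_nonneg by (simp add: a_def b_def n_def power_mult_distrib power_divide)
  ultimately have "prod_qform B p q / n \<in> W1i B" by simp
  then have "W1i_min B \<le> prod_qform B p q / n \<and> prod_qform B p q / n \<le> W1i_max B"
    using bounded_W1i[of B] unfolding W1i_min_def W1i_max_def
    by (auto intro: cInf_lower cSup_upper bounded_imp_bdd_below bounded_imp_bdd_above)
  moreover have "n > 0" using False sums_nonneg unfolding n_def by simp
  ultimately show ?thesis by (simp add: field_simps)
qed

lemma prod_vals_W1i_bounds:
  fixes X B :: "('m::finite, 'n::finite) bimat"
  assumes "X \<in> symsym"
    and XB: "X = (1/4) *\<^sub>R (B + transpose B + ptrans B + ptrans (transpose B))"
    and "c \<in> prod_vals X"
  shows "W1i_min B \<le> c \<and> c \<le> W1i_max B"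
proof -
  obtain v :: "complex ^ 'm" and w :: "complex ^ 'n" where "norm v = 1" "norm w = 1"
    and c: "c = prod_qform B (\<lambda>i. Re (v $ i)) (\<lambda>j. Re (w $ j))
      + prod_qform B (\<lambda>i. Re (v $ i)) (\<lambda>j. Im (w $ j))
      + prod_qform B (\<lambda>i. Im (v $ i)) (\<lambda>j. Re (w $ j))
      + prod_qform B (\<lambda>i. Im (v $ i)) (\<lambda>j. Im (w $ j))"
    using assms(3) unfolding prod_vals_eq[OF assms(1)] prod_qform_symmetrize[OF XB] by blast
  let ?aR = "\<Sum>i\<in>UNIV. (Re (v $ i))^2" and ?aI = "\<Sum>i\<in>UNIV. (Im (v $ i))^2"
  let ?bR = "\<Sum>j\<in>UNIV. (Re (w $ j))^2" and ?bI = "\<Sum>j\<in>UNIV. (Im (w $ j))^2"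
  have weights: "m * (?aR * ?bR) + m * (?aR * ?bI) + m * (?aI * ?bR) + m * (?aI * ?bI) = m" for m
  proof -
    have "?aR + ?aI = 1" "?bR + ?bI = 1"
      using \<open>norm v = 1\<close> \<open>norm w = 1\<close> norm_square_Re_Im[of v] norm_square_Re_Im[of w] by simp_all
    then have "m * ((?aR + ?aI) * (?bR + ?bI)) = m" by simp
    then show ?thesis by (simp add: algebra_simps)
  qed
  show ?thesis
    using c weights[of "W1i_min B"] weights[of "W1i_max B"]
      prod_qform_W1i_bounds[of B "\<lambda>i. Re (v $ i)" "\<lambda>j. Re (w $ j)"]
      prod_qform_W1i_bounds[of B "\<lambda>i. Re (v $ i)" "\<lambda>j. Im (w $ j)"]
      prod_qform_W1i_bounds[of B "\<lambda>i. Im (v $ i)" "\<lambda>j. Re (w $ j)"]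
      prod_qform_W1i_bounds[of B "\<lambda>i. Im (v $ i)" "\<lambda>j. Im (w $ j)"]
    by linarith
qed

theorem corollary5p2:
  fixes X B :: "('m::finite, 'n::finite) bimat"
  assumes "X \<in> symsym"
    and "X = (1/4) *\<^sub>R (B + transpose B + ptrans B + ptrans (transpose B))"
  shows "mu_min_C X \<ge> W1i_min B \<and> mu_max_C X \<le> W1i_max B"
proof -
  obtain v :: "complex ^ 'm" where "norm v = 1" using vector_choose_size[of 1] by auto
  moreover obtain w :: "complex ^ 'n" where "norm w = 1" using vector_choose_size[of 1] by auto
  ultimately have "prod_vals X \<noteq> {}" unfolding prod_vals_eq[OF assms(1)] by blast
  then show ?thesis
    using prod_vals_W1i_bounds[OF assms] unfolding mu_min_C_def mu_max_C_def
    by (auto intro: cInf_greatest cSup_least)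
qed

end
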